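(* Let $(N,A_1,A_2,\dots)$ be as in the context. Then $N_\delta(t)=N_\delta(ct)$ for all $t\in\mathbb{R}^d\setminus\{0\}$, $\delta\ge0$ and $c>0$. If moreover Conditions (C1) and (C7) hold, then there exist $\delta_0>0$ and $\eta>0$ such that $\mathbb{E}[N_\delta(t)]>1+\eta$ for all $t\in\mathbb{R}^d\setminus\{0\}$ and all $\delta\in[0,\delta_0]$.
   Context: Notation: $G$ is the set of $d\times d$ nonnegative matrices; $|x|=\sum_i|x_i|$; $\mathbb{S}^{d-1}=\{x\in\mathbb{R}^d:|x|=1\}$. Setting: random $A_i\in G$, $N=\#\{i:A_i\ne0\}<\infty$ a.s., $A_i\ne0$ iff $i\le N$. For $t\in\mathbb{R}^d$ and $\delta\ge0$: $N(t)=\#\{i\ge1:A_i^Tt\ne0\}$ and $N_\delta(t)=\#\{1\le i\le N:|A_i^Tt|>\delta|t|\}$. (C1) $N\ge1$ a.s., $\mathbb{E}[N]\in(1,\infty)$, $A_i\in G$, $A_i\ne0$ iff $i\le N$. (C7) A.s. $N(t)\ge1$ for all $t\ne0$, and $\mathbb{P}[N(t)=1]<1$ for each $t\ne0$; there exist $\varepsilon_0>0$ and for each $t\in\mathbb{S}^{d-1}$ an index $i(t)\in\mathbb{N}^*$ with $A_{i(t)}^Tt\ne0$ such that $\sup_{t\in\mathbb{S}^{d-1}}\mathbb{E}[|A_{i(t)}^Tt|^{-\varepsilon_0}]<\infty$. *)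

theory Defs
  imports "HOL-Probability.Probability"
begin

text \<open>A w i is the i-th random matrix (only indices i >= 1 are meaningful),
  N w is the random number of nonzero matrices.\<close>

definition l1norm :: "real^'d \<Rightarrow> real" where
  "l1norm x = (\<Sum>j\<in>UNIV. \<bar>x $ j\<bar>)"

definition Ncount :: "('w \<Rightarrow> nat \<Rightarrow> real^'d^'d) \<Rightarrow> real^'d \<Rightarrow> 'w \<Rightarrow> nat" where
  "Ncount A t w = card {i. 1 \<le> i \<and> transpose (A w i) *v t \<noteq> 0}"

definition Ndelta :: "('w \<Rightarrow> nat \<Rightarrow> real^'d^'d) \<Rightarrow> ('w \<Rightarrow> nat) \<Rightarrow> real \<Rightarrow> real^'d \<Rightarrow> 'w \<Rightarrow> nat" where
  "Ndelta A N \<delta> t w = card {i. 1 \<le> i \<and> i \<le> N w \<and> l1norm (transpose (A w i) *v t) > \<delta> * l1norm t}"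

text \<open>Condition (C1) (the structural parts A_i in G, A_i <> 0 iff i <= N are part of the setting).\<close>
definition cond_C1 :: "'w measure \<Rightarrow> ('w \<Rightarrow> nat) \<Rightarrow> bool" where
  "cond_C1 M N \<longleftrightarrow>
     (AE w in M. 1 \<le> N w) \<and>
     1 < (\<integral>\<^sup>+ w. of_nat (N w) \<partial>M) \<and> (\<integral>\<^sup>+ w. of_nat (N w) \<partial>M) < \<infinity>"

text \<open>Condition (C7); the index i(t) is allowed to be a random (measurable) index.\<close>
definition cond_C7 :: "'w measure \<Rightarrow> ('w \<Rightarrow> nat \<Rightarrow> real^'d^'d) \<Rightarrow> bool" where
  "cond_C7 M A \<longleftrightarrow>
     (AE w in M. \<forall>t::real^'d. t \<noteq> 0 \<longrightarrow> 1 \<le> Ncount A t w) \<and>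
     (\<forall>t::real^'d. t \<noteq> 0 \<longrightarrow> measure M {w \<in> space M. Ncount A t w = 1} < 1) \<and>
     (\<exists>\<epsilon>0>0. \<exists>idx :: real^'d \<Rightarrow> 'w \<Rightarrow> nat.
        (\<forall>t. idx t \<in> M \<rightarrow>\<^sub>M count_space UNIV) \<and>
        (\<forall>t. l1norm t = 1 \<longrightarrow>
              (AE w in M. 1 \<le> idx t w \<and> transpose (A w (idx t w)) *v t \<noteq> 0)) \<and>
        (\<exists>C::real. \<forall>t. l1norm t = 1 \<longrightarrow>
              (\<integral>\<^sup>+ w. ennreal (l1norm (transpose (A w (idx t w)) *v t) powr (- \<epsilon>0)) \<partial>M)
                \<le> ennreal C))"

end

theory Submission
  imports Defs
begin

text \<open>Scaling t by c > 0 multiplies both sides of |A_i^T t| > \<delta>|t| by c.  For the uniform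
  bound, fix \<omega>: every index counted by N_0(s) is still counted by N_\<delta>(t) for t near s and
  \<delta> near 0, so Fatou's lemma gives E N_0(s) \<le> liminf E N_\<delta>n(tn) whenever tn \<rightarrow> s and
  \<delta>n \<rightarrow> 0.  By (C7), N_0(s) = N(s) \<ge> 1 a.s. and P[N(s) = 1] < 1, so E N_0(s) > 1; since
  E N_\<delta>(t) depends only on t/|t|, compactness of the unit sphere makes this bound uniform.
  Only the first two clauses of (C7) are needed; (C1) and the nonnegativity of the A_i are not.\<close>

lemma l1norm_scaleR: "l1norm (c *\<^sub>R x) = \<bar>c\<bar> * l1norm x"
  unfolding l1norm_def by (simp add: abs_mult sum_distrib_left)

lemma l1norm_pos: "x \<noteq> 0 \<Longrightarrow> 0 < l1norm x"
proof -
  assume "x \<noteq> 0"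
  then obtain j where "x $ j \<noteq> 0" by (metis vec_eq_iff zero_index)
  then have "0 < \<bar>x $ j\<bar>" by simp
  also have "\<dots> \<le> l1norm x" unfolding l1norm_def
    by (rule member_le_sum) auto
  finally show ?thesis .
qed

lemma l1norm_eq_0_iff: "l1norm x = 0 \<longleftrightarrow> x = 0"
  using l1norm_pos[of x] by (cases "x = 0") (auto simp: l1norm_def)

lemma tendsto_l1norm: "(f \<longlongrightarrow> l) F \<Longrightarrow> ((\<lambda>n. l1norm (f n)) \<longlongrightarrow> l1norm l) F"
  unfolding l1norm_def by (intro tendsto_intros)

lemma bounded_l1norm_sphere: "bounded {x :: real^'d. l1norm x = 1}"
  unfolding bounded_iff l1norm_def by (intro exI[of _ 1]) (metis mem_Collect_eq norm_le_l1_cart)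

lemma Ndelta_scaleR:
  assumes "0 < c"
  shows "Ndelta A N \<delta> (c *\<^sub>R t) w = Ndelta A N \<delta> t w"
proof -
  have "\<delta> * (c * b) < c * a \<longleftrightarrow> \<delta> * b < a" for a b
    using assms by (metis mult.left_commute mult_less_cancel_left_pos)
  then show ?thesis unfolding Ndelta_def
    by (simp add: matrix_vector_mult_scaleR l1norm_scaleR assms abs_of_pos)
qed

lemma borel_measurable_Ndelta:
  assumes N: "N \<in> M \<rightarrow>\<^sub>M count_space UNIV"
    and [measurable]: "\<And>i j k. (\<lambda>w. A w i $ j $ k) \<in> borel_measurable M"
  shows "(\<lambda>w. real (Ndelta A N \<delta> t w)) \<in> borel_measurable M"
proof -
  define f where "f n w = (\<Sum>i\<in>{1..n}.
      if \<delta> * l1norm t < l1norm (transpose (A w i) *v t) then 1 else 0 :: real)" for n w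
  have "{i. 1 \<le> i \<and> i \<le> n \<and> P i} = {i\<in>{1..n}. P i}" for n :: nat and P by auto
  then have "real (Ndelta A N \<delta> t w) = f (N w) w" for w
    unfolding Ndelta_def f_def by (simp add: sum.inter_filter[symmetric])
  moreover have "(\<lambda>w. f (N w) w) \<in> borel_measurable M"
  proof (rule measurable_compose_countable[OF _ N])
    fix n show "f n \<in> borel_measurable M"
      unfolding f_def l1norm_def matrix_vector_mult_def transpose_def by simp
  qed
  ultimately show ?thesis by simp
qed

lemma Ncount_eq_Ndelta_0:
  assumes "\<And>i. 1 \<le> i \<Longrightarrow> (A w i \<noteq> 0 \<longleftrightarrow> i \<le> N w)"
  shows "Ncount A t w = Ndelta A N 0 t w"
proof -
  have "transpose (A w i) *v t \<noteq> 0 \<Longrightarrow> A w i \<noteq> 0" for i by auto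
  then have "{i. 1 \<le> i \<and> transpose (A w i) *v t \<noteq> 0}
      = {i. 1 \<le> i \<and> i \<le> N w \<and> 0 < l1norm (transpose (A w i) *v t)}"
    using assms l1norm_pos l1norm_eq_0_iff by (metis less_irrefl)
  then show ?thesis unfolding Ncount_def Ndelta_def by simp
qed

lemma (in prob_space) one_less_nn_integral_nat:
  fixes X :: "'a \<Rightarrow> nat"
  assumes "(\<lambda>w. real (X w)) \<in> borel_measurable M"
    and "AE w in M. 1 \<le> X w"
    and "prob {w \<in> space M. X w = 1} < 1"
  shows "1 < (\<integral>\<^sup>+ w. of_nat (X w) \<partial>M)"
proof -
  define E where "E = {w \<in> space M. real (X w) \<noteq> 1}"
  have E: "E \<in> events" unfolding E_def using assms(1) by measurable
  have "space M - E = {w \<in> space M. X w = 1}" unfolding E_def by auto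
  then have "0 < prob E" using prob_compl[OF E] assms(3) by simp
  then have "1 < ennreal (1 + prob E)" by simp
  also have "\<dots> = (\<integral>\<^sup>+ w. 1 + indicator E w \<partial>M)"
    using E by (simp add: nn_integral_add emeasure_eq_measure ennreal_plus prob_space)
  also have "\<dots> \<le> (\<integral>\<^sup>+ w. of_nat (X w) \<partial>M)"
  proof (rule nn_integral_mono_AE)
    show "AE w in M. 1 + indicator E w \<le> (of_nat (X w) :: ennreal)"
      using assms(2)
    proof eventually_elim
      case (elim w)
      then have "w \<in> E \<Longrightarrow> 2 \<le> X w" unfolding E_def by auto
      then have "w \<in> E \<Longrightarrow> (2::ennreal) \<le> of_nat (X w)"
        by (metis of_nat_le_iff of_nat_numeral)
      then show ?case using elim by (cases "w \<in> E") (auto simp: one_add_one)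
    qed
  qed
  finally show ?thesis .
qed

lemma eventually_Ndelta_0_le:
  assumes "(S \<longlongrightarrow> s) F" and "(D \<longlongrightarrow> 0) F"
  shows "eventually (\<lambda>n. Ndelta A N 0 s w \<le> Ndelta A N (D n) (S n) w) F"
proof -
  define I where "I = {i. 1 \<le> i \<and> i \<le> N w \<and> 0 * l1norm s < l1norm (transpose (A w i) *v s)}"
  have "finite I" unfolding I_def by (rule finite_subset[of _ "{..N w}"]) auto
  moreover have "eventually (\<lambda>n. D n * l1norm (S n) < l1norm (transpose (A w i) *v S n)) F"
    if "i \<in> I" for i
  proof -
    have "((\<lambda>n. l1norm (transpose (A w i) *v S n) - D n * l1norm (S n))
        \<longlongrightarrow> l1norm (transpose (A w i) *v s) - 0 * l1norm s) F"
      using assms by (intro tendsto_intros tendsto_l1norm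
          bounded_linear.tendsto[OF matrix_vector_mul_bounded_linear])
    moreover have "0 < l1norm (transpose (A w i) *v s) - 0 * l1norm s"
      using that unfolding I_def by simp
    ultimately show ?thesis by (auto dest: order_tendstoD(1))
  qed
  ultimately have "eventually (\<lambda>n. \<forall>i\<in>I. D n * l1norm (S n) < l1norm (transpose (A w i) *v S n)) F"
    by (simp add: eventually_ball_finite)
  then show ?thesis
    by eventually_elim (auto simp: Ndelta_def I_def intro!: card_mono)
qed

lemma nn_integral_Ndelta_0_le_liminf:
  assumes N: "N \<in> M \<rightarrow>\<^sub>M count_space UNIV"
    and A: "\<And>i j k. (\<lambda>w. A w i $ j $ k) \<in> borel_measurable M"
    and "S \<longlonglongrightarrow> s" and "D \<longlonglongrightarrow> 0"
  shows "(\<integral>\<^sup>+ w. of_nat (Ndelta A N 0 s w) \<partial>M)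
    \<le> liminf (\<lambda>n. \<integral>\<^sup>+ w. of_nat (Ndelta A N (D n) (S n) w) \<partial>M)"
proof -
  have "(\<integral>\<^sup>+ w. of_nat (Ndelta A N 0 s w) \<partial>M)
      \<le> (\<integral>\<^sup>+ w. liminf (\<lambda>n. of_nat (Ndelta A N (D n) (S n) w)) \<partial>M)"
    using eventually_Ndelta_0_le[OF assms(3,4)]
    by (intro nn_integral_mono Liminf_bounded) (simp add: eventually_mono)
  also have "\<dots> \<le> liminf (\<lambda>n. \<integral>\<^sup>+ w. of_nat (Ndelta A N (D n) (S n) w) \<partial>M)"
    using borel_measurable_Ndelta[OF N A]
    by (intro nn_integral_liminf) (simp add: ennreal_of_nat_eq_real_of_nat)
  finally show ?thesis .
qed

lemma (in prob_space) one_less_nn_integral_Ndelta_0: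
  assumes N: "N \<in> M \<rightarrow>\<^sub>M count_space UNIV"
    and A: "\<And>i j k. (\<lambda>w. A w i $ j $ k) \<in> borel_measurable M"
    and supp: "\<And>w i. 1 \<le> i \<Longrightarrow> (A w i \<noteq> 0 \<longleftrightarrow> i \<le> N w)"
    and C7: "cond_C7 M A" and "t \<noteq> 0"
  shows "1 < (\<integral>\<^sup>+ w. of_nat (Ndelta A N 0 t w) \<partial>M)"
proof -
  have eq: "Ncount A t w = Ndelta A N 0 t w" for w
    using supp by (rule Ncount_eq_Ndelta_0)
  moreover have "1 < (\<integral>\<^sup>+ w. of_nat (Ncount A t w) \<partial>M)"
  proof (rule one_less_nn_integral_nat)
    show "(\<lambda>w. real (Ncount A t w)) \<in> borel_measurable M"
      using borel_measurable_Ndelta[OF N A] by (simp add: eq)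
    show "AE w in M. 1 \<le> Ncount A t w" "prob {w \<in> space M. Ncount A t w = 1} < 1"
      using C7 \<open>t \<noteq> 0\<close> unfolding cond_C7_def by auto
  qed
  ultimately show ?thesis by simp
qed

lemma uniform_one_less_nn_integral_Ndelta:
  fixes A :: "'w \<Rightarrow> nat \<Rightarrow> real^'d^'d"
  assumes N: "N \<in> M \<rightarrow>\<^sub>M count_space UNIV"
    and A: "\<And>i j k. (\<lambda>w. A w i $ j $ k) \<in> borel_measurable M"
    and gt_1: "\<And>t. t \<noteq> 0 \<Longrightarrow> 1 < (\<integral>\<^sup>+ w. of_nat (Ndelta A N 0 t w) \<partial>M)"
  shows "\<exists>\<delta>0>0. \<exists>\<eta>>0. \<forall>(t::real^'d) \<delta>. t \<noteq> 0 \<longrightarrow> 0 \<le> \<delta> \<longrightarrow> \<delta> \<le> \<delta>0 \<longrightarrow>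
           ennreal (1 + \<eta>) < (\<integral>\<^sup>+ w. of_nat (Ndelta A N \<delta> t w) \<partial>M)"
proof (rule ccontr)
  define \<epsilon> where "\<epsilon> n = inverse (real (Suc n))" for n
  assume "\<not> ?thesis"
  moreover have "0 < \<epsilon> n" for n
    by (simp add: \<epsilon>_def)
  ultimately have "\<exists>t \<delta>. t \<noteq> 0 \<and> 0 \<le> \<delta> \<and> \<delta> \<le> \<epsilon> n \<and>
      (\<integral>\<^sup>+ w. of_nat (Ndelta A N \<delta> t w) \<partial>M) \<le> ennreal (1 + \<epsilon> n)" for n
    by (meson not_le)
  then obtain T D where T: "\<And>n. T n \<noteq> 0" and D: "\<And>n. 0 \<le> D n" "\<And>n. D n \<le> \<epsilon> n"
    and le: "\<And>n. (\<integral>\<^sup>+ w. of_nat (Ndelta A N (D n) (T n) w) \<partial>M) \<le> ennreal (1 + \<epsilon> n)"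
    by metis
  define S where "S n = inverse (l1norm (T n)) *\<^sub>R T n" for n
  have S_sphere: "l1norm (S n) = 1" for n
    using l1norm_pos[OF T, of n] by (simp add: S_def l1norm_scaleR)
  have Ndelta_S: "Ndelta A N (D n) (S n) = Ndelta A N (D n) (T n)" for n
    using l1norm_pos[OF T, of n] by (simp add: S_def Ndelta_scaleR fun_eq_iff)
  have "bounded (range S)"
    using bounded_l1norm_sphere by (rule bounded_subset) (auto simp: S_sphere)
  then obtain s r where r: "strict_mono r" and S_r: "(S \<circ> r) \<longlonglongrightarrow> s"
    using bounded_imp_convergent_subsequence by blast
  have "(\<lambda>n. l1norm ((S \<circ> r) n)) \<longlonglongrightarrow> l1norm s"
    using S_r by (rule tendsto_l1norm)
  then have "l1norm s = 1"
    using S_sphere by (simp add: LIMSEQ_const_iff)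
  then have "s \<noteq> 0"
    by (metis l1norm_eq_0_iff zero_neq_one)
  have \<epsilon>_r: "(\<epsilon> \<circ> r) \<longlonglongrightarrow> 0"
    unfolding \<epsilon>_def using LIMSEQ_subseq_LIMSEQ[OF LIMSEQ_inverse_real_of_nat r] by (simp add: o_def)
  have "(D \<circ> r) \<longlonglongrightarrow> 0"
    using D by (intro tendsto_sandwich[OF _ _ tendsto_const \<epsilon>_r]) auto
  have "1 < (\<integral>\<^sup>+ w. of_nat (Ndelta A N 0 s w) \<partial>M)"
    using gt_1 \<open>s \<noteq> 0\<close> .
  also have "\<dots> \<le> liminf (\<lambda>n. \<integral>\<^sup>+ w. of_nat (Ndelta A N (D (r n)) (S (r n)) w) \<partial>M)"
    using nn_integral_Ndelta_0_le_liminf[OF N A S_r \<open>(D \<circ> r) \<longlonglongrightarrow> 0\<close>] by (simp add: o_def)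
  also have "\<dots> \<le> liminf (\<lambda>n. ennreal (1 + \<epsilon> (r n)))"
    using le by (intro Liminf_mono) (simp add: Ndelta_S)
  also have "\<dots> = 1"
    using \<epsilon>_r by (intro lim_imp_Liminf) (auto intro!: tendsto_eq_intros simp: o_def)
  finally show False by simp
qed

theorem lemma4p1:
  fixes M :: "'w measure" and A :: "'w \<Rightarrow> nat \<Rightarrow> real^'d^'d" and N :: "'w \<Rightarrow> nat"
  assumes "prob_space M"
    and "N \<in> M \<rightarrow>\<^sub>M count_space UNIV"
    and "\<And>i j k. (\<lambda>w. A w i $ j $ k) \<in> borel_measurable M"
    and "\<And>w i j k. 0 \<le> A w i $ j $ k"
    and "\<And>w i. 1 \<le> i \<Longrightarrow> (A w i \<noteq> 0 \<longleftrightarrow> i \<le> N w)"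
  shows "(\<forall>w (t::real^'d) \<delta> (c::real). t \<noteq> 0 \<longrightarrow> 0 \<le> \<delta> \<longrightarrow> 0 < c \<longrightarrow>
            Ndelta A N \<delta> t w = Ndelta A N \<delta> (c *\<^sub>R t) w)
       \<and> (cond_C1 M N \<and> cond_C7 M A \<longrightarrow>
           (\<exists>\<delta>0>0. \<exists>\<eta>>0. \<forall>(t::real^'d) \<delta>. t \<noteq> 0 \<longrightarrow> 0 \<le> \<delta> \<longrightarrow> \<delta> \<le> \<delta>0 \<longrightarrow>
              ennreal (1 + \<eta>) < (\<integral>\<^sup>+ w. of_nat (Ndelta A N \<delta> t w) \<partial>M)))"
proof (intro conjI impI)
  show "\<forall>w (t::real^'d) \<delta> (c::real). t \<noteq> 0 \<longrightarrow> 0 \<le> \<delta> \<longrightarrow> 0 < c \<longrightarrow>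
      Ndelta A N \<delta> t w = Ndelta A N \<delta> (c *\<^sub>R t) w"
    by (simp add: Ndelta_scaleR)
next
  assume "cond_C1 M N \<and> cond_C7 M A"
  then have "1 < (\<integral>\<^sup>+ w. of_nat (Ndelta A N 0 t w) \<partial>M)" if "t \<noteq> 0" for t :: "real^'d"
    using prob_space.one_less_nn_integral_Ndelta_0[OF assms(1,2,3,5)] that by blast
  then show "\<exists>\<delta>0>0. \<exists>\<eta>>0. \<forall>(t::real^'d) \<delta>. t \<noteq> 0 \<longrightarrow> 0 \<le> \<delta> \<longrightarrow> \<delta> \<le> \<delta>0 \<longrightarrow>
      ennreal (1 + \<eta>) < (\<integral>\<^sup>+ w. of_nat (Ndelta A N \<delta> t w) \<partial>M)"
    by (rule uniform_one_less_nn_integral_Ndelta[OF assms(2,3)])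
qed

end
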